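(* Let $m\ge 2$ and let $C_{4m}=v_0v_1\cdots v_{4m-1}v_0$. Let $\mathscr A$ be any partition of $\{v_i: i \text{ even}\}$ into blocks of size $2$ and $\mathscr B$ any partition of $\{v_i : i\text{ odd}\}$ into blocks of size $2$. Let $G_{2m}(\mathscr A,\mathscr B)$ be the (not necessarily simple) $4$-regular graph obtained from $C_{4m}$ by identifying the two vertices of each block of $\mathscr A\cup\mathscr B$ into a single vertex. Then $\chi_{la}(G_{2m}(\mathscr A,\mathscr B))=3$.
   Context: Identifying a set of pairwise nonadjacent vertices means replacing them by one new vertex incident to all edges previously incident to any of them (parallel edges may arise). For a connected (multi)graph $G$ with edge set $E$, $|E|=q$, a local antimagic labeling is a bijection $f:E\to\{1,\dots,q\}$ such that adjacent vertices $x,y$ satisfy $f^+(x)\ne f^+(y)$, where $f^+(x)$ is the sum of the labels of the edges incident to $x$; $\chi_{la}(G)$ is the minimum number of distinct values of $f^+$ over all local antimagic labelings of $G$. *)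

theory Defs
  imports Main "HOL-Library.Disjoint_Sets"
begin

text \<open>A finite multigraph is given by a vertex set V, an edge set E and an
  endpoint map ends; parallel edges are distinct elements of E with the same ends.\<close>

definition vsum :: "'e set \<Rightarrow> ('e \<Rightarrow> 'v \<times> 'v) \<Rightarrow> ('e \<Rightarrow> nat) \<Rightarrow> 'v \<Rightarrow> nat" where
  "vsum E ends f x =
     (\<Sum>e\<in>E. (if fst (ends e) = x then f e else 0) + (if snd (ends e) = x then f e else 0))"

definition adjacent :: "'e set \<Rightarrow> ('e \<Rightarrow> 'v \<times> 'v) \<Rightarrow> 'v \<Rightarrow> 'v \<Rightarrow> bool" where
  "adjacent E ends x y \<longleftrightarrow> x \<noteq> y \<and> (\<exists>e\<in>E. ends e = (x, y) \<or> ends e = (y, x))"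

definition local_antimagic ::
  "'v set \<Rightarrow> 'e set \<Rightarrow> ('e \<Rightarrow> 'v \<times> 'v) \<Rightarrow> ('e \<Rightarrow> nat) \<Rightarrow> bool" where
  "local_antimagic V E ends f \<longleftrightarrow>
     bij_betw f E {1..card E} \<and>
     (\<forall>x\<in>V. \<forall>y\<in>V. adjacent E ends x y \<longrightarrow> vsum E ends f x \<noteq> vsum E ends f y)"

definition chi_la :: "'v set \<Rightarrow> 'e set \<Rightarrow> ('e \<Rightarrow> 'v \<times> 'v) \<Rightarrow> nat" where
  "chi_la V E ends =
     (LEAST k. \<exists>f. local_antimagic V E ends f \<and> card (vsum E ends f ` V) = k)"

definition pair_partition :: "nat set set \<Rightarrow> nat set \<Rightarrow> bool" where
  "pair_partition P S \<longleftrightarrow> partition_on S P \<and> (\<forall>X\<in>P. card X = 2)"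

definition blk :: "nat set set \<Rightarrow> nat \<Rightarrow> nat set" where
  "blk P i = (THE X. X \<in> P \<and> i \<in> X)"

text \<open>G_{2m}(A,B): cycle C_{4m} with vertices v_0..v_{4m-1} (indices), edge i joins
  v_i and v_{(i+1) mod 4m}; vertices in a common block of A \<union> B are identified,
  so the vertex set is A \<union> B and edge i joins the blocks of i and (i+1) mod 4m.\<close>
definition G_verts :: "nat set set \<Rightarrow> nat set set \<Rightarrow> nat set set" where
  "G_verts A B = A \<union> B"

definition G_edges :: "nat \<Rightarrow> nat set" where
  "G_edges m = {0..<4*m}"

definition G_ends :: "nat \<Rightarrow> nat set set \<Rightarrow> nat set set \<Rightarrow> nat \<Rightarrow> nat set \<times> nat set" where
  "G_ends m A B i = (blk (A \<union> B) i, blk (A \<union> B) ((i + 1) mod (4*m)))"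

end

theory Submission
  imports Defs
begin

(* In a loopless regular multigraph a local antimagic labeling has at least three vertex sums:
  with only two sums a and b, every edge joins an a-vertex to a b-vertex, so regularity gives
  both classes the same size |E|/d, while summing the vertex sums over either class counts every
  label exactly once; hence a = b, which is absurd. G_{2m}(A,B) is 4-regular.
  Conversely, labeling edge 2k of the cycle by k+1 and edge 2k+1 by 4m-1-k, except for the last
  edge 4m-1 which gets 4m, gives the blocks of A the sum 8m+2 and the blocks of B the sums 8m
  or 10m; as every edge joins a block of A to one of B, this labeling is local antimagic. *)

lemma blk_eqI:
  assumes "partition_on S P" "X \<in> P" "i \<in> X"
  shows "blk P i = X"
  unfolding blk_def
proof (rule the_equality)
  show "X \<in> P \<and> i \<in> X" using assms by simp
  show "Y = X" if "Y \<in> P \<and> i \<in> Y" for Y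
    using that assms disjointD[OF partition_onD2[OF assms(1)]] by blast
qed

lemma blk_in_partition:
  assumes "partition_on S P" "i \<in> S"
  shows "blk P i \<in> P" and "i \<in> blk P i"
proof -
  obtain X where "X \<in> P" "i \<in> X" using assms partition_onD1 by blast
  then show "blk P i \<in> P" "i \<in> blk P i" using blk_eqI[OF assms(1)] by simp_all
qed

lemma sum_vsum_transversal:
  assumes "finite S" "finite E"
    and one_end: "\<And>e. e \<in> E \<Longrightarrow> fst (ends e) \<in> S \<longleftrightarrow> snd (ends e) \<notin> S"
  shows "(\<Sum>x\<in>S. vsum E ends g x) = sum g E"
proof -
  have "(\<Sum>x\<in>S. vsum E ends g x)
      = (\<Sum>e\<in>E. (if fst (ends e) \<in> S then g e else 0) + (if snd (ends e) \<in> S then g e else 0))"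
    unfolding vsum_def using assms(1,2) by (subst sum.swap) (simp add: sum.distrib sum.delta)
  also have "\<dots> = sum g E"
    using one_end by (intro sum.cong) auto
  finally show ?thesis .
qed

lemma card_vsum_image_ge_3_if_regular:
  assumes "finite V" "finite E" "E \<noteq> {}"
    and ends: "\<And>e. e \<in> E \<Longrightarrow>
      fst (ends e) \<in> V \<and> snd (ends e) \<in> V \<and> fst (ends e) \<noteq> snd (ends e)"
    and regular: "\<And>x. x \<in> V \<Longrightarrow> vsum E ends (\<lambda>_. 1) x = d"
    and antimagic: "local_antimagic V E ends f"
  shows "3 \<le> card (vsum E ends f ` V)"
proof (rule ccontr)
  let ?s = "vsum E ends f"
  assume "\<not> 3 \<le> card (?s ` V)"
  have sep: "?s (fst (ends e)) \<noteq> ?s (snd (ends e))" if "e \<in> E" for e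
    using antimagic ends[OF that] that unfolding local_antimagic_def adjacent_def
    by (metis prod.collapse)
  obtain e0 where "e0 \<in> E" using assms(3) by blast
  define a where "a = ?s (fst (ends e0))"
  define b where "b = ?s (snd (ends e0))"
  have "a \<noteq> b" using sep[OF \<open>e0 \<in> E\<close>] by (simp add: a_def b_def)
  have two_sums: "?s x = a \<or> ?s x = b" if "x \<in> V" for x
  proof (rule ccontr)
    assume "\<not> ?thesis"
    then have "card {a, b, ?s x} = 3" using \<open>a \<noteq> b\<close> by auto
    moreover have "{a, b, ?s x} \<subseteq> ?s ` V"
      using that ends[OF \<open>e0 \<in> E\<close>] by (auto simp: a_def b_def)
    ultimately show False
      using card_mono[OF finite_imageI[OF assms(1)]] \<open>\<not> 3 \<le> card (?s ` V)\<close> by metis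
  qed
  have side_counts: "d * card S = card E \<and> c * card S = sum f E"
    if "c = a \<or> c = b" and S: "S = {x\<in>V. ?s x = c}" for c S
  proof -
    have "finite S" using S assms(1) by simp
    have one_end: "fst (ends e) \<in> S \<longleftrightarrow> snd (ends e) \<notin> S" if "e \<in> E" for e
      using two_sums ends[OF that] sep[OF that] \<open>c = a \<or> c = b\<close> S by auto
    have "d * card S = (\<Sum>x\<in>S. vsum E ends (\<lambda>_. 1) x)"
      using regular S by simp
    also have "\<dots> = card E"
      using sum_vsum_transversal[OF \<open>finite S\<close> assms(2) one_end] by simp
    finally have "d * card S = card E" .
    moreover have "c * card S = (\<Sum>x\<in>S. ?s x)"
      using S by simp
    moreover have "(\<Sum>x\<in>S. ?s x) = sum f E"
      using sum_vsum_transversal[OF \<open>finite S\<close> assms(2) one_end] .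
    ultimately show ?thesis by simp
  qed
  define Sa where "Sa = {x\<in>V. ?s x = a}"
  define Sb where "Sb = {x\<in>V. ?s x = b}"
  have "card E > 0" using assms(2,3) by (simp add: card_gt_0_iff)
  have dSa: "d * card Sa = card E" and aSa: "a * card Sa = sum f E"
    and dSb: "d * card Sb = card E" and bSb: "b * card Sb = sum f E"
    using side_counts[OF _ Sa_def] side_counts[OF _ Sb_def] by simp_all
  have "d \<noteq> 0" "card Sa \<noteq> 0" using dSa \<open>card E > 0\<close> by (metis mult_is_0 less_irrefl)+
  then have "card Sa = card Sb" using dSa dSb by (metis mult_left_cancel)
  then show False using aSa bSb \<open>card Sa \<noteq> 0\<close> \<open>a \<noteq> b\<close> by (metis mult_right_cancel)
qed

locale identified_cycle =
  fixes m :: nat and A B :: "nat set set"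
  assumes m_ge_2: "m \<ge> 2"
    and A_pairs: "pair_partition A {i. i < 4*m \<and> even i}"
    and B_pairs: "pair_partition B {i. i < 4*m \<and> odd i}"
begin

abbreviation vertex_sum :: "(nat \<Rightarrow> nat) \<Rightarrow> nat set \<Rightarrow> nat" where
  "vertex_sum f \<equiv> vsum (G_edges m) (G_ends m A B) f"

lemma even_if_in_A: "X \<in> A \<Longrightarrow> i \<in> X \<Longrightarrow> even i \<and> i < 4*m"
  and odd_if_in_B: "X \<in> B \<Longrightarrow> i \<in> X \<Longrightarrow> odd i \<and> i < 4*m"
  using A_pairs B_pairs partition_onD1 unfolding pair_partition_def by blast+

lemma card_block: "X \<in> A \<union> B \<Longrightarrow> card X = 2"
  using A_pairs B_pairs unfolding pair_partition_def by blast

lemma A_B_disjoint: "A \<inter> B = {}"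
proof (rule equals0I)
  fix X assume "X \<in> A \<inter> B"
  moreover have "{} \<notin> A" using A_pairs partition_onD3 unfolding pair_partition_def by blast
  ultimately obtain i where "i \<in> X" "X \<in> A" "X \<in> B" by (metis IntD1 IntD2 ex_in_conv)
  then show False using even_if_in_A odd_if_in_B by blast
qed

lemma partition_A_B: "partition_on {..<4*m} (A \<union> B)"
proof (rule partition_onI)
  show "\<Union>(A \<union> B) = {..<4*m}"
    using A_pairs B_pairs partition_onD1 unfolding pair_partition_def by auto
  show "disjnt X Y" if "X \<in> A \<union> B" "Y \<in> A \<union> B" "X \<noteq> Y" for X Y
  proof -
    have "disjoint A" "disjoint B"
      using A_pairs B_pairs partition_onD2 unfolding pair_partition_def by blast+
    then show ?thesis
      using that even_if_in_A odd_if_in_B disjointD[of A X Y] disjointD[of B X Y]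
      by (auto simp: disjnt_def)
  qed
  show "{} \<notin> A \<union> B"
    using A_pairs B_pairs partition_onD3 unfolding pair_partition_def by blast
qed

lemma blk_eq_iff: "X \<in> A \<union> B \<Longrightarrow> i < 4*m \<Longrightarrow> blk (A \<union> B) i = X \<longleftrightarrow> i \<in> X"
  using blk_eqI[OF partition_A_B] blk_in_partition[OF partition_A_B] by blast

lemma blk_parity: "i < 4*m \<Longrightarrow> blk (A \<union> B) i \<in> (if even i then A else B)"
  using blk_in_partition[OF partition_A_B, of i] even_if_in_A odd_if_in_B by auto

definition cyc_succ :: "nat \<Rightarrow> nat" where
  "cyc_succ i = (i + 1) mod (4*m)"

definition cyc_pred :: "nat \<Rightarrow> nat" where
  "cyc_pred i = (if i = 0 then 4*m - 1 else i - 1)"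

lemma cyc_succ_eq: "i < 4*m \<Longrightarrow> cyc_succ i = (if i = 4*m - 1 then 0 else i + 1)"
  unfolding cyc_succ_def by auto

lemma cyc_pred_succ: "i < 4*m \<Longrightarrow> cyc_pred (cyc_succ i) = i"
  by (auto simp: cyc_succ_eq cyc_pred_def)

lemma bij_cyc_succ: "bij_betw cyc_succ {..<4*m} {..<4*m}"
proof -
  have "inj_on cyc_succ {..<4*m}"
    by (rule inj_on_inverseI[where g = cyc_pred]) (simp add: cyc_pred_succ)
  moreover have "cyc_succ ` {..<4*m} \<subseteq> {..<4*m}"
    using m_ge_2 by (auto simp: cyc_succ_def)
  ultimately show ?thesis by (simp add: bij_betw_def endo_inj_surj)
qed

lemma even_cyc_succ: "i < 4*m \<Longrightarrow> even (cyc_succ i) \<longleftrightarrow> odd i"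
  by (auto simp: cyc_succ_eq; presburger)

lemma G_ends_A_B: "e \<in> G_edges m \<Longrightarrow> G_ends m A B e \<in> A \<times> B \<union> B \<times> A"
  using blk_parity[of e] blk_parity[of "cyc_succ e"] even_cyc_succ[of e] m_ge_2
  unfolding G_edges_def G_ends_def cyc_succ_def by (auto split: if_splits)

lemma vsum_G_ends:
  assumes X: "X \<in> A \<union> B"
  shows "vertex_sum f X = (\<Sum>t\<in>X. f t + f (cyc_pred t))"
proof -
  have "X \<subseteq> {..<4*m}" using X even_if_in_A odd_if_in_B by blast
  then have restrict: "(\<Sum>t<4*m. if t \<in> X then g t else 0) = (\<Sum>t\<in>X. g t)" for g
    by (simp add: sum.If_cases Int_absorb1)
  have "vertex_sum f X
      = (\<Sum>e<4*m. if e \<in> X then f e else 0) + (\<Sum>e<4*m. if cyc_succ e \<in> X then f e else 0)"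
    unfolding vsum_def G_edges_def G_ends_def atLeast0LessThan sum.distrib[symmetric]
    using blk_eq_iff[OF X] bij_betwE[OF bij_cyc_succ]
    by (intro sum.cong) (auto simp: cyc_succ_def)
  also have "(\<Sum>e<4*m. if cyc_succ e \<in> X then f e else 0)
      = (\<Sum>e<4*m. (\<lambda>t. if t \<in> X then f (cyc_pred t) else 0) (cyc_succ e))"
    by (intro sum.cong) (auto simp: cyc_pred_succ)
  also have "\<dots> = (\<Sum>t<4*m. if t \<in> X then f (cyc_pred t) else 0)"
    by (rule sum.reindex_bij_betw[OF bij_cyc_succ])
  finally show ?thesis by (simp add: restrict sum.distrib)
qed

lemma G_regular: "X \<in> G_verts A B \<Longrightarrow> vertex_sum (\<lambda>_. 1) X = 4"
  using vsum_G_ends card_block unfolding G_verts_def by simp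

lemma card_vsum_image_ge_3:
  assumes "local_antimagic (G_verts A B) (G_edges m) (G_ends m A B) f"
  shows "3 \<le> card (vertex_sum f ` G_verts A B)"
proof (rule card_vsum_image_ge_3_if_regular[OF _ _ _ _ G_regular assms])
  show "finite (G_verts A B)"
    using finite_elements[OF _ partition_A_B] unfolding G_verts_def by simp
  show "finite (G_edges m)" "G_edges m \<noteq> {}"
    using m_ge_2 unfolding G_edges_def by auto
  show "fst (G_ends m A B e) \<in> G_verts A B \<and> snd (G_ends m A B e) \<in> G_verts A B
      \<and> fst (G_ends m A B e) \<noteq> snd (G_ends m A B e)" if "e \<in> G_edges m" for e
    using G_ends_A_B[OF that] A_B_disjoint unfolding G_verts_def by auto
qed

definition label :: "nat \<Rightarrow> nat" where
  "label i = (if even i then i div 2 + 1 else if i = 4*m - 1 then 4*m else 4*m - 1 - i div 2)"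

lemma label_image: "label ` {..<4*m} = {1..4*m}"
proof
  show "label ` {..<4*m} \<subseteq> {1..4*m}" by (auto simp: label_def)
  show "{1..4*m} \<subseteq> label ` {..<4*m}"
  proof
    fix y assume y: "y \<in> {1..4*m}"
    consider "y \<le> 2*m" | "2*m < y" "y < 4*m" | "y = 4*m" using y by fastforce
    then show "y \<in> label ` {..<4*m}"
    proof cases
      case 1
      then have "label (2 * (y - 1)) = y" "2 * (y - 1) < 4*m" using y by (auto simp: label_def)
      then show ?thesis by (metis image_eqI lessThan_iff)
    next
      case 2
      then have "label (2 * (4*m - 1 - y) + 1) = y" "2 * (4*m - 1 - y) + 1 < 4*m"
        by (auto simp: label_def)
      then show ?thesis by (metis image_eqI lessThan_iff)
    next
      case 3
      then have "label (4*m - 1) = y" "4*m - 1 < 4*m" using m_ge_2 by (auto simp: label_def)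
      then show ?thesis by (metis image_eqI lessThan_iff)
    qed
  qed
qed

lemma label_bij: "bij_betw label (G_edges m) {1..card (G_edges m)}"
proof -
  have "inj_on label {..<4*m}"
    by (rule eq_card_imp_inj_on) (simp_all add: label_image)
  then show ?thesis
    unfolding G_edges_def atLeast0LessThan bij_betw_def by (simp add: label_image)
qed

lemma label_pair_sum:
  assumes "t < 4*m"
  shows "label t + label (cyc_pred t)
     = (if even t then 4*m + 1 else if t = 4*m - 1 then 6*m else 4*m)"
proof -
  have last_odd: "odd (4*m - 1)" using m_ge_2 by simp
  consider "t = 0" | k where "t = 2*k" "k > 0" | "t = 4*m - 1" | k where "t = 2*k + 1" "t \<noteq> 4*m - 1"
    by (metis evenE oddE gr0I mult_0_right)
  then show ?thesis
  proof cases
    case 1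
    then show ?thesis using last_odd by (simp add: label_def cyc_pred_def)
  next
    case 2
    then have "cyc_pred t = 2*(k - 1) + 1" "cyc_pred t \<noteq> 4*m - 1"
      using assms by (auto simp: cyc_pred_def)
    then show ?thesis using 2 assms by (simp add: label_def)
  next
    case 3
    then have "cyc_pred t = 2*(2*m - 1)" using m_ge_2 by (simp add: cyc_pred_def)
    then show ?thesis using 3 last_odd m_ge_2 by (simp add: label_def)
  next
    case 4
    then have "cyc_pred t = 2*k" by (simp add: cyc_pred_def)
    then show ?thesis using 4 assms by (simp add: label_def)
  qed
qed

lemma vsum_label_block:
  assumes "X \<in> A \<union> B"
  obtains i j where "i \<in> X" "j \<in> X" "i \<noteq> j"
    "vertex_sum label X = (label i + label (cyc_pred i)) + (label j + label (cyc_pred j))"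
proof -
  obtain i j where ij: "X = {i, j}" "i \<noteq> j"
    using card_block[OF assms] by (meson card_2_iff)
  then show ?thesis using that[of i j] vsum_G_ends[OF assms, of label] by simp
qed

lemma vsum_label_A: "X \<in> A \<Longrightarrow> vertex_sum label X = 8*m + 2"
  by (rule vsum_label_block[of X], simp) (use even_if_in_A label_pair_sum in simp)

lemma vsum_label_B: "X \<in> B \<Longrightarrow> vertex_sum label X \<in> {8*m, 10*m}"
  by (rule vsum_label_block[of X], simp) (use odd_if_in_B label_pair_sum in auto)

lemma label_local_antimagic: "local_antimagic (G_verts A B) (G_edges m) (G_ends m A B) label"
  unfolding local_antimagic_def
proof (intro conjI ballI impI label_bij)
  fix x y assume "adjacent (G_edges m) (G_ends m A B) x y"
  then obtain e where "e \<in> G_edges m" "G_ends m A B e = (x, y) \<or> G_ends m A B e = (y, x)"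
    unfolding adjacent_def by blast
  then have "x \<in> A \<and> y \<in> B \<or> x \<in> B \<and> y \<in> A"
    using G_ends_A_B by force
  moreover have "8*m + 2 \<notin> {8*m, 10*m}" using m_ge_2 by simp
  ultimately show "vertex_sum label x \<noteq> vertex_sum label y"
    using vsum_label_A vsum_label_B by metis
qed

lemma card_vsum_label_image: "card (vertex_sum label ` G_verts A B) = 3"
proof (rule antisym)
  have "vertex_sum label ` G_verts A B \<subseteq> {8*m + 2, 8*m, 10*m}"
    using vsum_label_A vsum_label_B unfolding G_verts_def by auto
  then have "card (vertex_sum label ` G_verts A B) \<le> card {8*m + 2, 8*m, 10*m}"
    by (intro card_mono) simp_all
  also have "\<dots> \<le> 3" by (simp add: card_insert_if)
  finally show "card (vertex_sum label ` G_verts A B) \<le> 3" .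
  show "3 \<le> card (vertex_sum label ` G_verts A B)"
    by (rule card_vsum_image_ge_3[OF label_local_antimagic])
qed

end

theorem mainTheorem9:
  fixes m :: nat and A B :: "nat set set"
  assumes "m \<ge> 2"
    and "pair_partition A {i. i < 4*m \<and> even i}"
    and "pair_partition B {i. i < 4*m \<and> odd i}"
  shows "chi_la (G_verts A B) (G_edges m) (G_ends m A B) = 3"
proof -
  interpret identified_cycle m A B using assms by unfold_locales
  show ?thesis
    unfolding chi_la_def
  proof (rule Least_equality)
    show "\<exists>f. local_antimagic (G_verts A B) (G_edges m) (G_ends m A B) f
        \<and> card (vsum (G_edges m) (G_ends m A B) f ` G_verts A B) = 3"
      using label_local_antimagic card_vsum_label_image by blast
    show "3 \<le> k" if "\<exists>f. local_antimagic (G_verts A B) (G_edges m) (G_ends m A B) f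
        \<and> card (vsum (G_edges m) (G_ends m A B) f ` G_verts A B) = k" for k
      using that card_vsum_image_ge_3 by blast
  qed
qed

end
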